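(* For every positive integer $n$, every feasible partition $w_1\le\dots\le w_m$ of $n$ and every $1\le i\le m$, one has $w_i\le 3^{i-1}$ and $R_i=w_1+\dots+w_i\le \frac{3^i-1}{2}$; these values are the highest possible, i.e. $3^{i-1}$ is the largest value the $i$-th part of any feasible partition can take, and $\frac{3^i-1}{2}$ is the largest positive integer whose feasible partitions have exactly $i$ parts.
   Context: A weighing partition of a positive integer $n$ is a multiset of positive integers summing to $n$ such that every integer $\ell$ with $1\le\ell\le n$ is a sum $\sum_j u_jw_j$ with $u_j\in\{-1,0,1\}$. A feasible partition of $n$ is a weighing partition of $n$ whose number of parts $m$ is minimal among all weighing partitions of $n$, written in nondecreasing order $w_1\le\dots\le w_m$. *)

theory Defs
  imports Main
begin

text \<open>A partition (multiset of positive integers) is represented by a list of its parts.\<close>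
definition weighing_partition :: "nat \<Rightarrow> nat list \<Rightarrow> bool" where
  "weighing_partition n ws \<longleftrightarrow>
     (\<forall>w\<in>set ws. 0 < w) \<and> sum_list ws = n \<and>
     (\<forall>l\<in>{1..n}. \<exists>u :: nat \<Rightarrow> int. (\<forall>j<length ws. u j \<in> {-1, 0, 1}) \<and>
        int l = (\<Sum>j<length ws. u j * int (ws ! j)))"

definition feasible_partition :: "nat \<Rightarrow> nat list \<Rightarrow> bool" where
  "feasible_partition n ws \<longleftrightarrow>
     sorted ws \<and> weighing_partition n ws \<and>
     (\<forall>vs. weighing_partition n vs \<longrightarrow> length ws \<le> length vs)"

end

theory Submission
  imports Defs
begin

text \<open>
  The signed sums of \<open>m\<close> weights form a set of at most \<open>3^m\<close> integers, symmetric about \<open>0\<close>, so a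
  weighing partition of \<open>n\<close> with \<open>m\<close> parts has \<open>2n + 1 \<le> 3^m\<close>; the powers \<open>1, 3, \<dots>, 3^(i-1)\<close>
  attain this bound by balanced ternary. For the part bounds, let \<open>R\<close> be the sum of the \<open>k\<close> smallest
  parts. In a representation of \<open>n - 2R - 1\<close> the remaining parts cannot all carry sign \<open>+1\<close>, since
  the small ones contribute at least \<open>-R\<close>; so one of them, which is at least the next part \<open>w\<close>, is
  left out or subtracted. This gives \<open>w \<le> 2R + 1\<close>, hence \<open>2R + 1 \<le> 3^k\<close> by induction on \<open>k\<close>.
\<close>

fun signed_sums :: "nat list \<Rightarrow> int set" where
  "signed_sums [] = {0}"
| "signed_sums (w # ws) = (\<lambda>(c, y). c * int w + y) ` ({-1, 0, 1} \<times> signed_sums ws)"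

lemma signed_sums_ConsI:
  "c \<in> {-1, 0, 1} \<Longrightarrow> y \<in> signed_sums ws \<Longrightarrow> c * int w + y \<in> signed_sums (w # ws)"
  by (force intro: rev_image_eqI[of "(c, y)"])

lemma zero_mem_signed_sums: "0 \<in> signed_sums ws"
  by (induction ws) (auto intro: signed_sums_ConsI[of 0, simplified])

lemma signed_sums_ConsE:
  assumes "x \<in> signed_sums (w # ws)"
  obtains c y where "c \<in> {-1, 0, 1}" "y \<in> signed_sums ws" "x = c * int w + y"
  using assms by auto

declare signed_sums.simps(2) [simp del]

lemma signed_sums_iff:
  "x \<in> signed_sums ws \<longleftrightarrow>
     (\<exists>u. (\<forall>j<length ws. u j \<in> {-1, 0, 1}) \<and> x = (\<Sum>j<length ws. u j * int (ws ! j)))"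
proof (induction ws arbitrary: x)
  case Nil
  then show ?case by simp
next
  case (Cons w ws)
  have shift: "(\<Sum>j<length (w # ws). u j * int ((w # ws) ! j))
      = u 0 * int w + (\<Sum>j<length ws. u (Suc j) * int (ws ! j))" for u :: "nat \<Rightarrow> int"
    by (simp only: length_Cons sum.lessThan_Suc_shift) simp
  show ?case
  proof
    assume "x \<in> signed_sums (w # ws)"
    then obtain c y where c: "c \<in> {-1, 0, 1}" and y: "y \<in> signed_sums ws"
      and x: "x = c * int w + y"
      by (elim signed_sums_ConsE)
    from y obtain u where u: "\<forall>j<length ws. u j \<in> {-1, 0, 1}"
      and y_eq: "y = (\<Sum>j<length ws. u j * int (ws ! j))"
      unfolding Cons.IH by blast
    let ?u = "case_nat c u"
    have "\<forall>j<length (w # ws). ?u j \<in> {-1, 0, 1}"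
      using c u by (auto split: nat.split)
    moreover have "x = (\<Sum>j<length (w # ws). ?u j * int ((w # ws) ! j))"
      by (simp only: shift) (simp add: x y_eq)
    ultimately show "\<exists>u. (\<forall>j<length (w # ws). u j \<in> {-1, 0, 1}) \<and>
        x = (\<Sum>j<length (w # ws). u j * int ((w # ws) ! j))" by blast
  next
    assume "\<exists>u. (\<forall>j<length (w # ws). u j \<in> {-1, 0, 1}) \<and>
        x = (\<Sum>j<length (w # ws). u j * int ((w # ws) ! j))"
    then obtain u where u: "\<forall>j<length (w # ws). u j \<in> {-1, 0, 1}"
      and x: "x = (\<Sum>j<length (w # ws). u j * int ((w # ws) ! j))" by blast
    have "u 0 \<in> {-1, 0, 1}" using u by simp
    moreover have "(\<Sum>j<length ws. u (Suc j) * int (ws ! j)) \<in> signed_sums ws"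
      unfolding Cons.IH using u by (intro exI[of _ "\<lambda>j. u (Suc j)"]) simp
    ultimately show "x \<in> signed_sums (w # ws)"
      unfolding x shift by (rule signed_sums_ConsI)
  qed
qed

lemma weighing_partition_iff:
  "weighing_partition n ws \<longleftrightarrow>
     (\<forall>w\<in>set ws. 0 < w) \<and> sum_list ws = n \<and> (\<forall>l\<in>{1..n}. int l \<in> signed_sums ws)"
  unfolding weighing_partition_def signed_sums_iff ..

lemma finite_signed_sums: "finite (signed_sums ws)"
  by (induction ws) (simp_all add: signed_sums.simps)

lemma card_signed_sums_le: "card (signed_sums ws) \<le> 3 ^ length ws"
proof (induction ws)
  case Nil
  then show ?case by simp
next
  case (Cons w ws)
  have "card (signed_sums (w # ws)) \<le> card ({-1, 0, 1::int} \<times> signed_sums ws)"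
    unfolding signed_sums.simps(2) by (rule card_image_le) (simp add: finite_signed_sums)
  also have "\<dots> = 3 * card (signed_sums ws)" by (simp add: card_cartesian_product)
  finally show ?case using Cons.IH by simp
qed

lemma uminus_mem_signed_sums: "x \<in> signed_sums ws \<Longrightarrow> - x \<in> signed_sums ws"
proof (induction ws arbitrary: x)
  case (Cons w ws)
  from Cons.prems obtain c y where "c \<in> {-1, 0, 1}" "y \<in> signed_sums ws" "x = c * int w + y"
    by (elim signed_sums_ConsE)
  with Cons.IH have "(- c) * int w + (- y) \<in> signed_sums (w # ws)"
    by (intro signed_sums_ConsI) auto
  with \<open>x = c * int w + y\<close> show ?case by simp
qed simp

lemma abs_signed_sum_le: "x \<in> signed_sums ws \<Longrightarrow> \<bar>x\<bar> \<le> int (sum_list ws)"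
proof (induction ws arbitrary: x)
  case (Cons w ws)
  from Cons.prems obtain c y where "c \<in> {-1, 0, 1}" "y \<in> signed_sums ws" "x = c * int w + y"
    by (elim signed_sums_ConsE)
  with Cons.IH[of y] show ?case by (auto simp: abs_le_iff)
qed simp

lemma signed_sums_appendE:
  assumes "x \<in> signed_sums (xs @ ys)"
  obtains a b where "a \<in> signed_sums xs" "b \<in> signed_sums ys" "x = a + b"
  using assms
proof (induction xs arbitrary: x thesis)
  case (Cons w xs)
  from Cons.prems(2) have "x \<in> signed_sums (w # xs @ ys)" by simp
  then obtain c y where c: "c \<in> {-1, 0, 1}" and y: "y \<in> signed_sums (xs @ ys)"
    and x: "x = c * int w + y"
    by (elim signed_sums_ConsE)
  obtain a b where "a \<in> signed_sums xs" "b \<in> signed_sums ys" "y = a + b"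
    by (rule Cons.IH[OF _ y])
  with c x show ?case
    by (intro Cons.prems(1)[of "c * int w + a" b]) (auto intro: signed_sums_ConsI)
qed simp

lemma signed_sum_below_sum_list:
  assumes "x \<in> signed_sums ws" and "x \<noteq> int (sum_list ws)"
  shows "\<exists>w\<in>set ws. x \<le> int (sum_list ws) - int w"
  using assms
proof (induction ws arbitrary: x)
  case (Cons w ws)
  from Cons.prems obtain c y where c: "c \<in> {-1, 0, 1}" and y: "y \<in> signed_sums ws"
    and x: "x = c * int w + y"
    by (elim signed_sums_ConsE)
  show ?case
  proof (cases "c = 1")
    case True
    with Cons.prems x have "y \<noteq> int (sum_list ws)" by simp
    with Cons.IH y obtain v where "v \<in> set ws" "y \<le> int (sum_list ws) - int v" by blast
    with True x show ?thesis by (intro bexI[of _ v]) auto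
  next
    case False
    with c have "c * int w \<le> 0" by auto
    moreover have "y \<le> int (sum_list ws)" using abs_signed_sum_le[OF y] by simp
    ultimately show ?thesis using x by (intro bexI[of _ w]) auto
  qed
qed simp

lemma weighing_partition_card_bound:
  assumes "weighing_partition n ws"
  shows "2 * n + 1 \<le> 3 ^ length ws"
proof -
  have "{- int n..int n} \<subseteq> signed_sums ws"
  proof
    fix x assume x: "x \<in> {- int n..int n}"
    show "x \<in> signed_sums ws"
    proof (cases "x = 0")
      case True
      then show ?thesis by (simp add: zero_mem_signed_sums)
    next
      case False
      with x have "nat \<bar>x\<bar> \<in> {1..n}" by auto
      with assms have "int (nat \<bar>x\<bar>) \<in> signed_sums ws" unfolding weighing_partition_iff by blast
      then have "\<bar>x\<bar> \<in> signed_sums ws" by simp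
      then show ?thesis by (cases "x < 0") (auto dest: uminus_mem_signed_sums)
    qed
  qed
  then have "card {- int n..int n} \<le> card (signed_sums ws)"
    by (intro card_mono finite_signed_sums)
  with card_signed_sums_le[of ws] show ?thesis by simp
qed

lemma sorted_weighing_partition_part_le:
  assumes "sorted ws" and "weighing_partition n ws" and "k < length ws"
  shows "ws ! k \<le> 2 * sum_list (take k ws) + 1"
proof -
  define R where "R = sum_list (take k ws)"
  define L where "L = sum_list (drop k ws)"
  have n: "n = R + L"
    using assms(2) by (simp add: weighing_partition_def R_def L_def flip: sum_list_append)
  have drop: "drop k ws = ws ! k # drop (Suc k) ws"
    using assms(3) by (rule Cons_nth_drop_Suc[symmetric])
  then have L_ge: "ws ! k \<le> L" by (simp add: L_def)
  have nth_le_drop: "ws ! k \<le> v" if "v \<in> set (drop k ws)" for v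
    using that sorted_wrt_drop[OF assms(1), of k] by (auto simp: drop)
  show ?thesis
  proof (cases "n \<le> 2 * R + 1")
    case True
    with n L_ge show ?thesis by (simp add: R_def)
  next
    case False
    define l where "l = n - 2 * R - 1"
    from False have "l \<in> {1..n}" by (simp add: l_def)
    with assms(2) have "int l \<in> signed_sums (take k ws @ drop k ws)"
      by (simp add: weighing_partition_iff)
    then obtain a b where a: "a \<in> signed_sums (take k ws)" and b: "b \<in> signed_sums (drop k ws)"
      and l: "int l = a + b"
      by (rule signed_sums_appendE)
    from abs_signed_sum_le[OF a] have "\<bar>a\<bar> \<le> int R" by (simp add: R_def)
    with l False n have "b \<noteq> int L" by (simp add: l_def)
    with b obtain v where "v \<in> set (drop k ws)" and "b \<le> int L - int v"
      using signed_sum_below_sum_list by (force simp: L_def)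
    with nth_le_drop have "b \<le> int L - int (ws ! k)" by force
    with l \<open>\<bar>a\<bar> \<le> int R\<close> False n show ?thesis by (simp add: l_def R_def)
  qed
qed

lemma sorted_weighing_partition_prefix_bound:
  assumes "sorted ws" and "weighing_partition n ws" and "k \<le> length ws"
  shows "2 * sum_list (take k ws) + 1 \<le> 3 ^ k"
  using assms(3)
proof (induction k)
  case (Suc k)
  then have k: "k < length ws" by simp
  then have "sum_list (take (Suc k) ws) = sum_list (take k ws) + ws ! k"
    by (simp add: take_Suc_conv_app_nth)
  with sorted_weighing_partition_part_le[OF assms(1,2) k] Suc show ?case by simp
qed simp

lemma sorted_weighing_partition_nth_le:
  assumes "sorted ws" and "weighing_partition n ws" and "k < length ws"
  shows "ws ! k \<le> 3 ^ k"
  using sorted_weighing_partition_part_le[OF assms]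
    sorted_weighing_partition_prefix_bound[OF assms(1,2), of k] assms(3)
  by simp

lemma two_mul_half_three_pow: "2 * ((3 ^ i - 1) div 2) + 1 = (3 ^ i :: nat)"
  by simp

definition powers_of_three :: "nat \<Rightarrow> nat list" where
  "powers_of_three i = map ((^) 3) [0..<i]"

lemma length_powers_of_three [simp]: "length (powers_of_three i) = i"
  by (simp add: powers_of_three_def)

lemma nth_powers_of_three [simp]: "j < i \<Longrightarrow> powers_of_three i ! j = 3 ^ j"
  by (simp add: powers_of_three_def)

lemma powers_of_three_Suc: "powers_of_three (Suc i) = 1 # map ((*) 3) (powers_of_three i)"
  by (simp add: powers_of_three_def upt_conv_Cons map_Suc_upt[symmetric] del: upt_Suc)

lemma sum_list_powers_of_three: "sum_list (powers_of_three i) = (3 ^ i - 1) div 2"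
  by (induction i) (auto simp: powers_of_three_def)

lemma signed_sums_map_mult:
  "x \<in> signed_sums ws \<Longrightarrow> int c * x \<in> signed_sums (map ((*) c) ws)"
proof (induction ws arbitrary: x)
  case (Cons w ws)
  from Cons.prems obtain d y where "d \<in> {-1, 0, 1}" "y \<in> signed_sums ws"
    and x: "x = d * int w + y"
    by (elim signed_sums_ConsE)
  with Cons.IH have "d * int (c * w) + int c * y \<in> signed_sums (map ((*) c) (w # ws))"
    by (simp add: signed_sums_ConsI del: of_nat_mult)
  moreover have "int c * x = d * int (c * w) + int c * y"
    using x by (simp add: algebra_simps)
  ultimately show ?case by (simp only:)
qed simp

lemma balanced_ternary_digit:
  fixes x :: int
  assumes "2 * \<bar>x\<bar> + 1 \<le> 3 ^ Suc i"
  shows "\<exists>d\<in>{-1, 0, 1}. \<exists>y. x = d + 3 * y \<and> 2 * \<bar>y\<bar> + 1 \<le> 3 ^ i"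
proof -
  have "odd ((3::int) ^ i)" by simp
  then obtain k where k: "(3::int) ^ i = 2 * k + 1" by (rule oddE)
  define y where "y = (x + 1) div 3"
  define d where "d = (x + 1) mod 3 - 1"
  have "x = d + 3 * y"
    unfolding d_def y_def using div_mult_mod_eq[of "x + 1" 3] by linarith
  moreover have "d \<in> {-1, 0, 1}" unfolding d_def by auto
  moreover have "\<bar>y\<bar> \<le> k"
    using assms k unfolding y_def by (simp add: abs_le_iff) presburger
  ultimately show ?thesis using k by force
qed

lemma mem_signed_sums_powers_of_three:
  "2 * \<bar>x\<bar> + 1 \<le> 3 ^ i \<Longrightarrow> x \<in> signed_sums (powers_of_three i)"
proof (induction i arbitrary: x)
  case 0
  then show ?case by (simp add: powers_of_three_def)
next
  case (Suc i)
  then obtain d y where "d \<in> {-1, 0, 1}" "x = d + 3 * y" "2 * \<bar>y\<bar> + 1 \<le> 3 ^ i"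
    using balanced_ternary_digit by blast
  with Suc.IH signed_sums_map_mult[of y _ 3] show ?case
    unfolding powers_of_three_Suc by (metis signed_sums_ConsI mult_1_right of_nat_1 of_nat_numeral)
qed

lemma weighing_partition_powers_of_three:
  "weighing_partition ((3 ^ i - 1) div 2) (powers_of_three i)"
  unfolding weighing_partition_iff
proof (intro conjI ballI)
  show "0 < w" if "w \<in> set (powers_of_three i)" for w
    using that by (auto simp: powers_of_three_def)
  show "sum_list (powers_of_three i) = (3 ^ i - 1) div 2"
    by (rule sum_list_powers_of_three)
  fix l :: nat assume "l \<in> {1..(3 ^ i - 1) div 2}"
  then have "l \<le> (3 ^ i - 1) div 2" by simp
  with two_mul_half_three_pow[of i] have "2 * l + 1 \<le> 3 ^ i" by linarith
  then have "int (2 * l + 1) \<le> int (3 ^ i)" by (simp only: of_nat_le_iff)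
  then have "2 * \<bar>int l\<bar> + 1 \<le> 3 ^ i" by simp
  then show "int l \<in> signed_sums (powers_of_three i)"
    by (rule mem_signed_sums_powers_of_three)
qed

lemma feasible_partition_powers_of_three:
  "feasible_partition ((3 ^ i - 1) div 2) (powers_of_three i)"
  unfolding feasible_partition_def
proof (intro conjI allI impI)
  show "sorted (powers_of_three i)"
    by (simp add: powers_of_three_def sorted_iff_nth_mono power_increasing)
  show "weighing_partition ((3 ^ i - 1) div 2) (powers_of_three i)"
    by (rule weighing_partition_powers_of_three)
  fix vs assume "weighing_partition ((3 ^ i - 1) div 2) vs"
  from weighing_partition_card_bound[OF this] have "(3::nat) ^ i \<le> 3 ^ length vs"
    by (simp only: two_mul_half_three_pow)
  then show "length (powers_of_three i) \<le> length vs" by simp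
qed

lemma feasible_partition_length:
  assumes "feasible_partition ((3 ^ i - 1) div 2) ws"
  shows "length ws = i"
proof -
  from assms have "length ws \<le> length (powers_of_three i)"
    using weighing_partition_powers_of_three unfolding feasible_partition_def by blast
  moreover from assms have "weighing_partition ((3 ^ i - 1) div 2) ws"
    unfolding feasible_partition_def by blast
  from weighing_partition_card_bound[OF this] have "(3::nat) ^ i \<le> 3 ^ length ws"
    by (simp only: two_mul_half_three_pow)
  ultimately show ?thesis by simp
qed

theorem theorem3:
  shows "(\<forall>n ws i. 0 < n \<longrightarrow> feasible_partition n ws \<longrightarrow> 1 \<le> i \<longrightarrow> i \<le> length ws \<longrightarrow>
            ws ! (i - 1) \<le> 3 ^ (i - 1) \<and> sum_list (take i ws) \<le> (3 ^ i - 1) div 2)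
       \<and> (\<forall>i\<ge>1. \<exists>n ws. 0 < n \<and> feasible_partition n ws \<and> i \<le> length ws \<and>
            ws ! (i - 1) = 3 ^ (i - 1))
       \<and> (\<forall>i\<ge>1. (\<exists>ws. feasible_partition ((3 ^ i - 1) div 2) ws) \<and>
            (\<forall>ws. feasible_partition ((3 ^ i - 1) div 2) ws \<longrightarrow> length ws = i) \<and>
            (\<forall>n ws. (3 ^ i - 1) div 2 < n \<longrightarrow> feasible_partition n ws \<longrightarrow> length ws \<noteq> i))"
proof (intro conjI allI impI)
  fix n ws i assume "feasible_partition n ws" and i: "1 \<le> i" "i \<le> length ws"
  then have ws: "sorted ws" "weighing_partition n ws" by (simp_all add: feasible_partition_def)
  show "ws ! (i - 1) \<le> 3 ^ (i - 1)"
    using sorted_weighing_partition_nth_le[OF ws, of "i - 1"] i by simp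
  show "sum_list (take i ws) \<le> (3 ^ i - 1) div 2"
    using sorted_weighing_partition_prefix_bound[OF ws i(2)] by simp
next
  fix i :: nat assume "1 \<le> i"
  then have "0 < ((3::nat) ^ i - 1) div 2"
    using power_increasing[of 1 i "3::nat"] by simp
  with \<open>1 \<le> i\<close>
  show "\<exists>n ws. 0 < n \<and> feasible_partition n ws \<and> i \<le> length ws \<and> ws ! (i - 1) = 3 ^ (i - 1)"
    using feasible_partition_powers_of_three[of i] by fastforce
next
  fix i :: nat
  show "\<exists>ws. feasible_partition ((3 ^ i - 1) div 2) ws"
    using feasible_partition_powers_of_three by blast
  show "length ws = i" if "feasible_partition ((3 ^ i - 1) div 2) ws" for ws
    using that by (rule feasible_partition_length)
  fix n ws assume "(3 ^ i - 1) div 2 < n" and "feasible_partition n ws"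
  then show "length ws \<noteq> i"
    using weighing_partition_card_bound two_mul_half_three_pow[of i]
    unfolding feasible_partition_def by fastforce
qed

end
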